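(* Let $\alpha_1,\alpha_2>0$, let $f\in\mathcal{A}$ with $f(z)\neq0$ for $0<|z|<1$, and let $$Y_f(z)=1+\alpha_1\,(A_2-A_1^2+A_1)+\alpha_2\,(A_3+2A_2+2A_1^3-2A_1^2-3A_1A_2),$$ where $A_1=zf'(z)/f(z)$, $A_2=z^2f''(z)/f(z)$, $A_3=z^3f'''(z)/f(z)$. Then $f\in\mathcal{S}^*_e$ if any one of the following holds: (i) $Y_f(z)\prec 2/(1+e^{-z})$ and $\alpha_1-\alpha_2\ge e\,r_0$, where $r_0\approx0.546302$ is the positive root of $r^2+2\cot(1)\,r-1=0$; (ii) $Y_f(z)\prec z+\sqrt{1+z^2}$ and $\alpha_1-\alpha_2\ge\sqrt2\,e$; (iii) $Y_f(z)\prec 1+\sin z$ and $\alpha_1-\alpha_2\ge e\sinh 1$; (iv) $Y_f(z)\prec 1+ze^z$ and $\alpha_1-\alpha_2\ge e^2$; (v) $Y_f(z)\prec 1+\sinh^{-1}z$ and $2(\alpha_1-\alpha_2)\ge\pi e$; (vi) $Y_f(z)\prec e^z$ and $\alpha_1-\alpha_2\ge e(e-1)$.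
   Context: $\mathbb{D}=\{z\in\mathbb{C}:|z|<1\}$. $\mathcal{A}$ is the class of analytic functions $f$ on $\mathbb{D}$ with $f(z)=z+a_2z^2+\cdots$. For $g,h$ analytic in $\mathbb{D}$, $g\prec h$ means there is an analytic $w:\mathbb{D}\to\mathbb{D}$ with $w(0)=0$ and $g=h\circ w$. $\mathcal{S}^*_e=\{f\in\mathcal{A}: zf'(z)/f(z)\prec e^z\}$. Square roots and $\sinh^{-1}$ denote the branches analytic in $\mathbb{D}$ with values $1$ and $0$ at $z=0$ respectively. *)

theory Defs
  imports "HOL-Analysis.Analysis"
begin

definition unit_disc :: "complex set" where
  "unit_disc = ball 0 1"

definition class_A :: "(complex \<Rightarrow> complex) set" where
  "class_A = {f. f holomorphic_on unit_disc \<and> f 0 = 0 \<and> deriv f 0 = 1}"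

definition subord :: "(complex \<Rightarrow> complex) \<Rightarrow> (complex \<Rightarrow> complex) \<Rightarrow> bool" where
  "subord g h \<longleftrightarrow> (\<exists>w. w holomorphic_on unit_disc \<and> w ` unit_disc \<subseteq> unit_disc \<and> w 0 = 0
       \<and> (\<forall>z\<in>unit_disc. g z = h (w z)))"

text \<open>The quotients z^k f^(k)(z)/f(z), with their removable values at z = 0
  (for f in class A, these limits are 1, 0, 0 for k = 1, 2, 3).\<close>
definition quotA :: "nat \<Rightarrow> (complex \<Rightarrow> complex) \<Rightarrow> complex \<Rightarrow> complex" where
  "quotA k f z = (if z = 0 then (if k = 1 then 1 else 0)
                  else z ^ k * (deriv ^^ k) f z / f z)"

definition starlike_exp :: "(complex \<Rightarrow> complex) set" where
  "starlike_exp = {f \<in> class_A. subord (quotA 1 f) exp}"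

definition Yf :: "real \<Rightarrow> real \<Rightarrow> (complex \<Rightarrow> complex) \<Rightarrow> complex \<Rightarrow> complex" where
  "Yf a1 a2 f z = (let A1 = quotA 1 f z; A2 = quotA 2 f z; A3 = quotA 3 f z in
     1 + of_real a1 * (A2 - A1^2 + A1)
       + of_real a2 * (A3 + 2*A2 + 2*A1^3 - 2*A1^2 - 3*A1*A2))"

text \<open>Positive root of r^2 + 2 cot(1) r - 1 = 0.\<close>
definition r0 :: real where
  "r0 = sqrt ((cot 1)^2 + 1) - cot 1"

text \<open>Branches analytic in the disc: principal square root (1+z^2 has positive real part),
  and asinh z = Ln (z + sqrt(1+z^2)) (its argument never lies on the closed negative axis).\<close>
definition casinh :: "complex \<Rightarrow> complex" where
  "casinh z = Ln (z + csqrt (1 + z^2))"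

end

theory Submission
  imports Defs "HOL-Complex_Analysis.Complex_Analysis"
begin

text \<open>Write p = z f'/f, so that Y_f = 1 + \<alpha>1 z p' + \<alpha>2 z^2 p''. If Y_f \<prec> h and |h - 1| < M on the
  disc, Schwarz's lemma gives |Y_f - 1| \<le> M|z|. For q = z p' this says
  |(\<alpha>1 - \<alpha>2) q + \<alpha>2 z q'| \<le> M|z|, and integrating along rays gives |q| \<le> M|z|/\<alpha>1 and then
  |p - 1| \<le> M/\<alpha>1. If M \<le> (e - 1) \<rho> and e \<rho> \<le> \<alpha>1 - \<alpha>2, this is below 1 - 1/e, so that
  |log p| < 1, i.e. p \<prec> exp. Each of the six functions h satisfies |h - 1| < (e - 1) \<rho> on the
  disc for the constant \<rho> in the corresponding hypothesis.\<close>

section \<open>Subordination and growth estimates on the disc\<close>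

lemma subord_norm_diff_le:
  assumes "subord g h" and holg: "g holomorphic_on ball 0 1"
    and h: "\<And>\<zeta>. \<zeta> \<in> ball 0 1 \<Longrightarrow> norm (h \<zeta> - g 0) < R"
    and z: "z \<in> ball 0 1"
  shows "norm (g z - g 0) \<le> R * norm z"
proof -
  obtain w where wD: "w ` ball 0 1 \<subseteq> ball 0 1"
    and gw: "\<And>z. z \<in> ball 0 1 \<Longrightarrow> g z = h (w z)"
    using assms(1) by (auto simp: subord_def unit_disc_def)
  have gh: "norm (g z - g 0) < R" if "z \<in> ball 0 1" for z
  proof -
    have "w z \<in> ball 0 1" using wD that by blast
    then show ?thesis using h gw[OF that] by simp
  qed
  have R: "R > 0" using gh[of 0] by simp
  define G where "G z = (g z - g 0) / R" for z
  have "norm (G z) \<le> norm z"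
  proof (rule Schwarz_Lemma(1))
    show "G holomorphic_on ball 0 1" unfolding G_def by (intro holomorphic_intros holg) (use R in auto)
    show "norm (G z) < 1" if "norm z < 1" for z
      using gh[of z] that R by (simp add: G_def norm_divide)
  qed (use z in \<open>auto simp: G_def\<close>)
  then show ?thesis using R by (simp add: G_def norm_divide field_simps)
qed

lemma has_vector_derivative_powr_mult_radial:
  fixes q :: "complex \<Rightarrow> complex"
  assumes holq: "q holomorphic_on S" and "open S" and t: "0 < t" and tz: "of_real t * z \<in> S"
  shows "((\<lambda>s. of_real (s powr c) * q (of_real s * z)) has_vector_derivative
     of_real (t powr (c - 1)) * (of_real c * q (of_real t * z) + of_real t * z * deriv q (of_real t * z)))
     (at t)"
proof -
  have "(q has_field_derivative deriv q (of_real t * z)) (at ((\<lambda>w. w * z) (of_real t)))"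
    using holomorphic_derivI[OF holq \<open>open S\<close> tz] by simp
  moreover have "((\<lambda>w. w * z) has_field_derivative z) (at (of_real t))"
    by (auto intro!: derivative_eq_intros)
  ultimately have "((\<lambda>w. q (w * z)) has_field_derivative deriv q (of_real t * z) * z) (at (of_real t))"
    by (rule DERIV_chain2)
  then have "((\<lambda>s. q (of_real s * z)) has_vector_derivative z * deriv q (of_real t * z)) (at t)"
    using has_vector_derivative_real_field by (fastforce simp: mult.commute)
  moreover have "((\<lambda>s. s powr c) has_real_derivative c * t powr (c - 1)) (at t)"
    using t by (auto intro!: derivative_eq_intros)
  ultimately have "((\<lambda>s. of_real (s powr c) * q (of_real s * z)) has_vector_derivative
      of_real (t powr c) * (z * deriv q (of_real t * z)) + of_real (c * t powr (c - 1)) * q (of_real t * z))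
      (at t)"
    by (intro has_vector_derivative_mult has_vector_derivative_of_real)
  moreover have "t powr c = t powr (c - 1) * t" using t by (simp add: powr_diff)
  ultimately show ?thesis by (simp add: algebra_simps)
qed

text \<open>Integrating t^(c-1) (c q + w q')(tw) over [0,1] recovers q(w); we bound the derivative
  of t^c q(tw) instead of the integral.\<close>
lemma Euler_operator_norm_bound:
  fixes q :: "complex \<Rightarrow> complex"
  assumes holq: "q holomorphic_on ball 0 1" and q0: "q 0 = 0" and c: "c > 0"
    and bnd: "\<And>w. w \<in> ball 0 1 \<Longrightarrow> norm (of_real c * q w + w * deriv q w) \<le> M * norm w"
    and z: "z \<in> ball 0 1"
  shows "norm (q z) \<le> M * norm z / (c + 1)"
proof -
  have ray: "of_real t * z \<in> ball 0 1" if "0 \<le> t" "t \<le> 1" for t :: real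
    using z that mult_left_le_one_le[of "norm z" t] by (auto simp: norm_mult)
  define \<phi> where "\<phi> t = of_real (t powr c) * q (of_real t * z)" for t :: real
  define \<psi> where "\<psi> t = M * norm z * t powr (c + 1) / (c + 1)" for t :: real
  have "continuous_on {0..1} (\<lambda>t::real. q (of_real t * z))"
    by (rule continuous_on_compose2[OF holomorphic_on_imp_continuous_on[OF holq]])
       (auto intro!: continuous_intros ray)
  then have "continuous_on {0..1} \<phi>"
    unfolding \<phi>_def using c by (intro continuous_intros continuous_on_powr') auto
  moreover have "continuous_on {0..1} \<psi>"
    unfolding \<psi>_def using c by (intro continuous_intros continuous_on_powr') auto
  moreover have "(\<psi> has_vector_derivative M * norm z * t powr c) (at t)" if "0 < t" for t
  proof -
    have "(\<psi> has_real_derivative M * norm z * ((c + 1) * t powr (c + 1 - 1)) / (c + 1)) (at t)"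
      unfolding \<psi>_def using that by (auto intro!: derivative_eq_intros)
    then show ?thesis using c by (simp add: has_real_derivative_iff_has_vector_derivative mult.assoc)
  qed
  moreover have "norm (of_real (t powr (c - 1)) * (of_real c * q (of_real t * z)
      + of_real t * z * deriv q (of_real t * z))) \<le> M * norm z * t powr c"
    if "0 < t" "t < 1" for t
  proof -
    have "norm (of_real (t powr (c - 1)) * (of_real c * q (of_real t * z)
        + of_real t * z * deriv q (of_real t * z))) \<le> t powr (c - 1) * (M * (t * norm z))"
      using bnd[OF ray] that by (auto simp: norm_mult intro!: mult_left_mono)
    also have "\<dots> = M * norm z * t powr c" using that by (simp add: powr_diff)
    finally show ?thesis .
  qed
  moreover have "(\<phi> has_vector_derivative of_real (t powr (c - 1)) * (of_real c * q (of_real t * z)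
      + of_real t * z * deriv q (of_real t * z))) (at t)" if "0 < t" "t < 1" for t
    unfolding \<phi>_def by (rule has_vector_derivative_powr_mult_radial[OF holq open_ball]) (use that ray in auto)
  ultimately have "norm (\<phi> 1 - \<phi> 0) \<le> \<psi> 1 - \<psi> 0"
    by (intro differentiable_bound_general[OF zero_less_one]) auto
  then show ?thesis using c q0 by (simp add: \<phi>_def \<psi>_def)
qed

lemma norm_sub_le_of_radial_deriv_bound:
  fixes P :: "complex \<Rightarrow> complex"
  assumes holP: "P holomorphic_on ball 0 1"
    and bnd: "\<And>w. w \<in> ball 0 1 \<Longrightarrow> norm (w * deriv P w) \<le> K * norm w"
    and z: "z \<in> ball 0 1"
  shows "norm (P z - P 0) \<le> K * norm z"
proof -
  have bnd': "norm (deriv P w) \<le> K" if "w \<in> ball 0 1 - {0}" for w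
    using bnd[of w] that by (simp add: norm_mult)
  have "isCont (deriv P) 0"
    using holomorphic_on_imp_continuous_on[OF holomorphic_deriv[OF holP open_ball]]
    by (simp add: continuous_on_interior)
  moreover have "eventually (\<lambda>v. v \<in> ball 0 1 - {0}) (at (0::complex))"
    by (intro eventually_at_in_open) auto
  then have "eventually (\<lambda>v. norm (deriv P v) \<le> K) (at (0::complex))"
    by eventually_elim (rule bnd')
  ultimately have "norm (deriv P 0) \<le> K"
    by (intro Lim_norm_ubound[OF trivial_limit_at]) (auto simp: isCont_def)
  then have deriv_bnd: "norm (deriv P w) \<le> K" if "w \<in> ball 0 1" for w
    using bnd'[of w] that by (cases "w = 0") auto
  have "norm (P z - P 0) \<le> K * norm (z - 0)"
    by (rule field_differentiable_bound[OF convex_ball _ deriv_bnd z])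
       (auto intro: holomorphic_derivI[OF holP open_ball])
  then show ?thesis by simp
qed

lemma norm_Ln_one_plus_le:
  fixes x :: complex
  assumes x: "norm x < 1"
  shows "norm (Ln (1 + x)) \<le> - ln (1 - norm x)"
proof -
  have "(\<lambda>n. - ((- x) ^ n) / of_nat n) sums Ln (1 + x)" by (rule Ln_series'[OF x])
  moreover have "(\<lambda>n. norm (- ((- x) ^ n) / of_nat n)) sums (- ln (1 - norm x))"
  proof -
    have "(\<lambda>n. - ((- (- norm x)) ^ n) / of_nat n) sums ln (1 + - norm x)"
      by (rule ln_series') (use x in auto)
    from sums_minus[OF this] show ?thesis by (simp add: norm_divide norm_power)
  qed
  ultimately show ?thesis
    by (metis sums_iff summable_norm)
qed

lemma subord_exp_if_norm_sub_one_less: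
  fixes P :: "complex \<Rightarrow> complex"
  assumes holP: "P holomorphic_on ball 0 1" and P0: "P 0 = 1"
    and bnd: "\<And>z. z \<in> ball 0 1 \<Longrightarrow> norm (P z - 1) < 1 - exp (-1)"
  shows "subord P exp"
proof -
  have bnd1: "norm (P z - 1) < 1" if "z \<in> ball 0 1" for z
    using bnd[OF that] exp_gt_zero[of "-1::real"] by linarith
  have Re_P: "Re (P z) > 0" if "z \<in> ball 0 1" for z
    using abs_Re_le_cmod[of "P z - 1"] bnd1[OF that] by simp
  have "norm (Ln (P z)) < 1" if z: "z \<in> ball 0 1" for z
  proof -
    have "norm (Ln (P z)) \<le> - ln (1 - norm (P z - 1))"
      using norm_Ln_one_plus_le[OF bnd1[OF z]] by simp
    also have "\<dots> < - ln (exp (-1))"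
      using bnd[OF z] bnd1[OF z] by (subst neg_less_iff_less, intro ln_less_cancel_iff[THEN iffD2]) auto
    finally show ?thesis by simp
  qed
  moreover have "(\<lambda>z. Ln (P z)) holomorphic_on ball 0 1"
    by (intro holomorphic_on_Ln' holP) (use Re_P in \<open>fastforce simp: complex_nonpos_Reals_iff\<close>)
  moreover have "P z = exp (Ln (P z))" if "z \<in> ball 0 1" for z
    using Re_P[OF that] by (subst exp_Ln) auto
  ultimately show ?thesis
    unfolding subord_def unit_disc_def using P0 by (intro exI[of _ "\<lambda>z. Ln (P z)"]) auto
qed

section \<open>The quotient z f'/f\<close>

lemma holomorphic_quotA_1:
  assumes "f \<in> class_A" and nz: "\<And>z. z \<in> ball 0 1 - {0} \<Longrightarrow> f z \<noteq> 0"
  shows "quotA 1 f holomorphic_on ball 0 1"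
proof -
  have holf: "f holomorphic_on ball 0 1" and f0: "f 0 = 0" and f'0: "deriv f 0 = 1"
    using assms(1) by (auto simp: class_A_def unit_disc_def)
  obtain F where holF: "F holomorphic_on ball 0 1" and fF: "\<And>z. norm z < 1 \<Longrightarrow> f z = z * F z"
    and F0: "deriv f 0 = F 0"
    using Schwarz3[OF holf f0] by blast
  have F_nz: "F z \<noteq> 0" if "z \<in> ball 0 1" for z
    using nz[of z] fF[of z] that F0 f'0 by (cases "z = 0") auto
  have f': "deriv f z = F z + z * deriv F z" if "z \<in> ball 0 1" for z
  proof -
    have "((\<lambda>z. z * F z) has_field_derivative F z + z * deriv F z) (at z)"
      using holomorphic_derivI[OF holF open_ball that] by (auto intro!: derivative_eq_intros)
    then have "(f has_field_derivative F z + z * deriv F z) (at z)"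
      by (rule has_field_derivative_transform_within_open[OF _ open_ball that]) (use fF in auto)
    then show ?thesis by (rule DERIV_imp_deriv)
  qed
  \<comment> \<open>Writing f = z F removes the apparent singularity: z f'/f = 1 + z F'/F.\<close>
  have "(\<lambda>z. 1 + z * deriv F z / F z) holomorphic_on ball 0 1"
    using F_nz by (intro holomorphic_intros holomorphic_deriv holF) auto
  moreover have "1 + z * deriv F z / F z = quotA 1 f z" if "z \<in> ball 0 1" for z
    using that F_nz[OF that] fF[of z] f'[OF that] by (auto simp: quotA_def field_simps)
  ultimately show ?thesis by (rule holomorphic_transform)
qed

lemma deriv_quotA_1:
  assumes holf: "f holomorphic_on ball 0 1" and nz: "\<And>z. z \<in> ball 0 1 - {0} \<Longrightarrow> f z \<noteq> 0"
    and z: "z \<in> ball 0 1 - {0}"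
  shows "deriv (quotA 1 f) z = (deriv f z + z * deriv (deriv f) z) / f z - z * deriv f z ^ 2 / f z ^ 2"
proof -
  have "((\<lambda>w. w * deriv f w / f w) has_field_derivative
          (deriv f z + z * deriv (deriv f) z) / f z - z * deriv f z ^ 2 / f z ^ 2) (at z)"
    using z nz[OF z] holomorphic_derivI[OF holf open_ball]
      holomorphic_derivI[OF holomorphic_deriv[OF holf open_ball] open_ball]
    by (auto intro!: derivative_eq_intros simp: field_simps power2_eq_square)
  then have "(quotA 1 f has_field_derivative
          (deriv f z + z * deriv (deriv f) z) / f z - z * deriv f z ^ 2 / f z ^ 2) (at z)"
    by (rule has_field_derivative_transform_within_open[of _ _ _ "ball 0 1 - {0}"])
       (use z in \<open>auto simp: quotA_def\<close>)
  then show ?thesis by (rule DERIV_imp_deriv)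
qed

lemma Yf_eq_derivatives:
  fixes f :: "complex \<Rightarrow> complex"
  assumes holf: "f holomorphic_on ball 0 1" and nz: "\<And>z. z \<in> ball 0 1 - {0} \<Longrightarrow> f z \<noteq> 0"
    and z: "z \<in> ball 0 1"
  shows "Yf a1 a2 f z =
    1 + a1 * z * deriv (quotA 1 f) z + a2 * z ^ 2 * deriv (deriv (quotA 1 f)) z"
proof (cases "z = 0")
  case True
  then show ?thesis by (simp add: Yf_def quotA_def)
next
  case False
  define S where "S = ball 0 1 - {0::complex}"
  define f1 f2 f3 where "f1 = deriv f" and "f2 = deriv f1" and "f3 = deriv f2"
  have zS: "z \<in> S" using z False by (simp add: S_def)
  have hol1: "f1 holomorphic_on ball 0 1" and hol2: "f2 holomorphic_on ball 0 1"
    unfolding f1_def f2_def by (intro holomorphic_deriv holf open_ball)+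
  define E1 where "E1 w = (f1 w + w * f2 w) / f w - w * f1 w ^ 2 / f w ^ 2" for w
  define E2 where "E2 w = (2 * f2 w + w * f3 w) / f w - (f1 w + w * f2 w) * f1 w / f w ^ 2
       - (f1 w ^ 2 / f w ^ 2 + 2 * w * f1 w * f2 w / f w ^ 2 - 2 * w * f1 w ^ 3 / f w ^ 3)" for w
  have "(f has_field_derivative f1 z) (at z)" "(f1 has_field_derivative f2 z) (at z)"
    "(f2 has_field_derivative f3 z) (at z)"
    unfolding f1_def f2_def f3_def
    by (intro holomorphic_derivI[OF _ open_ball z] holf hol1[unfolded f1_def]
        hol2[unfolded f2_def f1_def])+
  moreover have fz: "f z \<noteq> 0" using nz zS by (simp add: S_def)
  ultimately have "(E1 has_field_derivative E2 z) (at z)"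
    unfolding E1_def
    by (auto intro!: derivative_eq_intros) (simp add: E2_def field_simps; algebra)
  then have "(deriv (quotA 1 f) has_field_derivative E2 z) (at z)"
    by (rule has_field_derivative_transform_within_open[of _ _ _ S])
       (use zS deriv_quotA_1[OF holf nz] in \<open>auto simp: S_def E1_def f1_def f2_def\<close>)
  then have "deriv (deriv (quotA 1 f)) z = E2 z" by (rule DERIV_imp_deriv)
  with False fz show ?thesis
    by (simp only: deriv_quotA_1[OF holf nz zS[unfolded S_def]])
       (simp add: Yf_def quotA_def numeral_2_eq_2 numeral_3_eq_3 E2_def f1_def f2_def f3_def
        Let_def field_simps power2_eq_square power3_eq_cube)
qed

lemma quotA_1_bound_of_Yf_bound:
  fixes f :: "complex \<Rightarrow> complex"
  assumes fA: "f \<in> class_A" and nz: "\<And>z. z \<in> ball 0 1 - {0} \<Longrightarrow> f z \<noteq> 0"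
    and a2: "0 < a2" "a2 < a1"
    and Y: "\<And>z. z \<in> ball 0 1 \<Longrightarrow> norm (Yf a1 a2 f z - 1) \<le> M * norm z"
    and z: "z \<in> ball 0 1"
  shows "norm (quotA 1 f z - 1) \<le> M / a1 * norm z"
proof -
  define P where "P = quotA 1 f"
  have holf: "f holomorphic_on ball 0 1" using fA by (simp add: class_A_def unit_disc_def)
  have holP: "P holomorphic_on ball 0 1" unfolding P_def by (rule holomorphic_quotA_1[OF fA nz])
  have hol1: "deriv P holomorphic_on ball 0 1" by (intro holomorphic_deriv holP open_ball)
  define q where "q z = z * deriv P z" for z
  have "norm (q z) \<le> M / a2 * norm z / ((a1 - a2) / a2 + 1)" if z: "z \<in> ball 0 1" for z
  proof (rule Euler_operator_norm_bound[OF _ _ _ _ z])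
    show "q holomorphic_on ball 0 1" unfolding q_def by (intro holomorphic_intros hol1)
    show "norm (of_real ((a1 - a2) / a2) * q w + w * deriv q w) \<le> M / a2 * norm w"
      if w: "w \<in> ball 0 1" for w
    proof -
      have "(q has_field_derivative deriv P w + w * deriv (deriv P) w) (at w)"
        unfolding q_def using holomorphic_derivI[OF hol1 open_ball w]
        by (auto intro!: derivative_eq_intros)
      then have "of_real ((a1 - a2) / a2) * q w + w * deriv q w = (Yf a1 a2 f w - 1) / of_real a2"
        using a2 Yf_eq_derivatives[OF holf nz w, of a1 a2] unfolding P_def[symmetric]
        by (simp add: DERIV_imp_deriv q_def field_simps power2_eq_square)
      then show ?thesis using Y[OF w] a2 by (simp add: norm_divide divide_right_mono)
    qed
  qed (use a2 in \<open>auto simp: q_def\<close>)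
  then have "norm (z * deriv P z) \<le> M / a1 * norm z" if "z \<in> ball 0 1" for z
    using that a2 by (simp add: q_def field_simps)
  from norm_sub_le_of_radial_deriv_bound[OF holP this z] show ?thesis
    by (simp add: P_def quotA_def)
qed

lemma starlike_exp_if_subord_Yf:
  fixes f h :: "complex \<Rightarrow> complex" and a1 a2 \<rho> :: real
  assumes fA: "f \<in> class_A" and nz: "\<And>z. z \<in> ball 0 1 - {0} \<Longrightarrow> f z \<noteq> 0"
    and a2: "0 < a2" and sub: "subord (Yf a1 a2 f) h" and a12: "exp 1 * \<rho> \<le> a1 - a2"
    and h: "\<And>\<zeta>. norm \<zeta> < 1 \<Longrightarrow> norm (h \<zeta> - 1) < (exp 1 - 1) * \<rho>"
  shows "f \<in> starlike_exp"
proof -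
  define M where "M = (exp 1 - 1) * \<rho>"
  have "M > 0" using h[of 0] le_less_trans[OF norm_ge_zero] by (simp add: M_def)
  then have "exp 1 * \<rho> > 0" by (simp add: M_def zero_less_mult_iff)
  then have a1: "a2 < a1" "exp 1 * \<rho> \<le> a1" using a12 a2 by linarith+
  have holf: "f holomorphic_on ball 0 1" using fA by (simp add: class_A_def unit_disc_def)
  have holP: "quotA 1 f holomorphic_on ball 0 1" by (rule holomorphic_quotA_1[OF fA nz])
  have Y0: "Yf a1 a2 f 0 = 1" by (simp add: Yf_def quotA_def)
  have "(\<lambda>z. 1 + a1 * z * deriv (quotA 1 f) z + a2 * z ^ 2 * deriv (deriv (quotA 1 f)) z)
      holomorphic_on ball 0 1"
    by (intro holomorphic_intros holomorphic_deriv holP open_ball)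
  then have holY: "Yf a1 a2 f holomorphic_on ball 0 1"
    by (rule holomorphic_transform) (rule Yf_eq_derivatives[OF holf nz, symmetric])
  have "norm (Yf a1 a2 f z - 1) \<le> M * norm z" if "z \<in> ball 0 1" for z
    using subord_norm_diff_le[OF sub holY _ that] h by (simp add: Y0 M_def)
  then have P: "norm (quotA 1 f z - 1) \<le> M / a1 * norm z" if "z \<in> ball 0 1" for z
    using quotA_1_bound_of_Yf_bound[OF fA nz a2 a1(1) _ that] by blast
  have "M / a1 \<le> 1 - exp (-1)"
  proof -
    have "M = (1 - exp (-1)) * (exp 1 * \<rho>)" by (simp add: M_def exp_minus field_simps)
    also have "\<dots> \<le> (1 - exp (-1)) * a1" using a1(2) by (intro mult_left_mono) auto
    finally show ?thesis using a1 a2 by (simp add: field_simps)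
  qed
  then have "norm (quotA 1 f z - 1) < 1 - exp (-1)" if "z \<in> ball 0 1" for z
    using P[OF that] that \<open>M > 0\<close> a1 a2 mult_strict_left_mono[of "norm z" 1 "M / a1"]
    by (auto intro: order.trans)
  moreover have "quotA 1 f 0 = 1" by (simp add: quotA_def)
  ultimately have "subord (quotA 1 f) exp"
    using subord_exp_if_norm_sub_one_less[OF holP] by blast
  then show ?thesis using fA by (simp add: starlike_exp_def)
qed

section \<open>The six subordinating functions\<close>

lemma exp_one_gt_27_10: "27/10 < exp (1::real)"
  using e_approx_32 by (simp add: abs_if split: if_split_asm)

lemma r0_ge_half: "r0 \<ge> 1/2"
proof -
  have "\<bar>sin 1 - (\<Sum>m<5. sin_coeff m * 1 ^ m)\<bar> \<le> inverse (fact 5) * \<bar>1::real\<bar> ^ 5"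
    by (rule Maclaurin_sin_bound)
  then have "\<bar>sin 1 - 5/6\<bar> \<le> (1/120::real)"
    by (simp add: sin_coeff_def lessThan_nat_numeral fact_numeral)
  then have sin1: "sin 1 \<ge> (4/5::real)" by (simp only: abs_le_iff) linarith
  have cos1_nonneg: "cos 1 \<ge> (0::real)" by (rule cos_ge_zero) (use pi_ge_two in auto)
  have "(4/5) ^ 2 \<le> sin (1::real) ^ 2" using sin1 by (intro power_mono) auto
  then have "cos 1 ^ 2 \<le> (3/5::real) ^ 2" by (simp add: cos_squared_eq power_divide)
  then have "cos 1 \<le> (3/5::real)" by (rule power2_le_imp_le) simp
  then have "cot 1 \<le> (3/4::real)" "cot 1 \<ge> (0::real)"
    using sin1 cos1_nonneg by (auto simp: cot_def divide_le_eq)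
  then have "cot 1 + 1/2 \<le> sqrt (cot 1 ^ 2 + (1::real))"
    by (intro real_le_rsqrt) (simp add: power2_eq_square algebra_simps)
  then show ?thesis by (simp add: r0_def)
qed

lemma cos_gt_half: "\<bar>y\<bar> < 1 \<Longrightarrow> cos y > (1/2::real)"
proof -
  assume "\<bar>y\<bar> < 1"
  then have "\<bar>y\<bar> < pi/3" using pi_gt3 by linarith
  then have "cos (pi/3) < cos \<bar>y\<bar>" by (subst cos_mono_less_eq) (use pi_gt3 in auto)
  then show ?thesis by (simp add: cos_60)
qed

lemma norm_one_plus_exp_squared:
  "norm (1 + exp w) ^ 2 = 1 + 2 * exp (Re w) * cos (Im w) + exp (Re w) ^ 2"
proof -
  have "norm (1 + exp w) ^ 2 = (1 + exp (Re w) * cos (Im w)) ^ 2 + (exp (Re w) * sin (Im w)) ^ 2"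
    by (simp add: cmod_power2 Re_exp Im_exp)
  also have "\<dots> = 1 + 2 * exp (Re w) * cos (Im w) + exp (Re w) ^ 2 * (sin (Im w) ^ 2 + cos (Im w) ^ 2)"
    by algebra
  finally show ?thesis by simp
qed

lemma norm_one_minus_exp_squared:
  "norm (1 - exp w) ^ 2 = 1 - 2 * exp (Re w) * cos (Im w) + exp (Re w) ^ 2"
proof -
  have "norm (1 - exp w) ^ 2 = (1 - exp (Re w) * cos (Im w)) ^ 2 + (exp (Re w) * sin (Im w)) ^ 2"
    by (simp add: cmod_power2 Re_exp Im_exp)
  also have "\<dots> = 1 - 2 * exp (Re w) * cos (Im w) + exp (Re w) ^ 2 * (sin (Im w) ^ 2 + cos (Im w) ^ 2)"
    by algebra
  finally show ?thesis by simp
qed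

lemma norm_sigmoid_sub_one_less:
  fixes \<zeta> :: complex assumes "norm \<zeta> < 1"
  shows "norm (2 / (1 + exp (- \<zeta>)) - 1) < 4/5"
proof -
  define a c where "a = exp (- Re \<zeta>)" and "c = cos (Im \<zeta>)"
  have "\<bar>Re \<zeta>\<bar> < 1" "\<bar>Im \<zeta>\<bar> < 1"
    using abs_Re_le_cmod[of \<zeta>] abs_Im_le_cmod[of \<zeta>] assms by linarith+
  then have a: "exp (-1) < a" "a < exp 1" and c: "c > 1/2"
    using cos_gt_half by (auto simp: a_def c_def)
  moreover have "3/10 < exp (-1::real)" using e_less_272 by (simp add: exp_minus field_simps)
  ultimately have "3/10 < a" "a < 3" using e_less_272 by linarith+
  then have "(a - 3/10) * (a - 3) < 0" by (intro mult_pos_neg) auto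
  then have "a * a < 33/10 * a - 9/10" by (simp add: field_simps)
  moreover have "a < 2 * (a * c)" using c \<open>3/10 < a\<close> by simp
  ultimately have "25 - 50 * (a * c) + 25 * (a * a) < 16 + 32 * (a * c) + 16 * (a * a)"
    using \<open>3/10 < a\<close> by linarith
  moreover have "norm (1 - exp (- \<zeta>)) ^ 2 = 1 - 2 * (a * c) + a * a"
    and "norm (1 + exp (- \<zeta>)) ^ 2 = 1 + 2 * (a * c) + a * a"
    using norm_one_minus_exp_squared[of "- \<zeta>"] norm_one_plus_exp_squared[of "- \<zeta>"]
    by (simp_all add: a_def c_def power2_eq_square mult.assoc)
  ultimately have "norm (1 - exp (- \<zeta>)) ^ 2 < (4/5 * norm (1 + exp (- \<zeta>))) ^ 2"
    unfolding power_mult_distrib by (simp add: power_divide)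
  then have lt: "norm (1 - exp (- \<zeta>)) < 4/5 * norm (1 + exp (- \<zeta>))"
    by (rule power2_less_imp_less) simp
  then have "1 + exp (- \<zeta>) \<noteq> 0" by auto
  then have "2 / (1 + exp (- \<zeta>)) - 1 = (1 - exp (- \<zeta>)) / (1 + exp (- \<zeta>))"
    by (simp add: field_simps)
  then show ?thesis using lt by (simp add: norm_divide divide_less_eq)
qed

lemma norm_crescent_sub_one_less:
  fixes \<zeta> :: complex assumes "norm \<zeta> < 1"
  shows "norm (\<zeta> + csqrt (1 + \<zeta>^2) - 1) < 2"
proof -
  define s where "s = csqrt (1 + \<zeta>^2)"
  have "s^2 = 1 + \<zeta>^2" by (simp add: s_def)
  then have "(s - 1) * (s + 1) = \<zeta>^2" by (simp add: algebra_simps power2_eq_square)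
  then have prod: "norm (s - 1) * norm (s + 1) = norm \<zeta> ^ 2" by (metis norm_mult norm_power)
  have "1 \<le> Re (s + 1)" using Re_csqrt[of "1 + \<zeta>^2"] by (simp add: s_def)
  also have "\<dots> \<le> norm (s + 1)" by (rule complex_Re_le_cmod)
  finally have "norm (s - 1) \<le> norm (s - 1) * norm (s + 1)" by (simp add: mult_le_cancel_left1)
  also have "\<dots> = norm \<zeta> ^ 2" by (rule prod)
  also have "\<dots> < 1" using assms by (simp add: power_less_one_iff)
  finally have "norm (\<zeta> + (s - 1)) < 2" using norm_triangle_ineq[of \<zeta> "s - 1"] assms by linarith
  then show ?thesis by (simp add: s_def algebra_simps)
qed

lemma norm_sin_le_cosh_Im: "norm (sin z) \<le> cosh (Im z)"
proof -
  have "norm (sin z) ^ 2 \<le> (exp (2 * Im z) + inverse (exp (2 * Im z)) + 2) / 4"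
    unfolding norm_sin_squared
    by (rule divide_right_mono) (use cos_ge_minus_one[of "2 * Re z"] in linarith, simp)
  also have "\<dots> = cosh (Im z) ^ 2"
    by (simp add: cosh_def exp_minus power2_eq_square field_simps flip: exp_add)
  finally show ?thesis by (rule power2_le_imp_le) simp
qed

lemma norm_sin_less_cosh_one:
  fixes \<zeta> :: complex assumes "norm \<zeta> < 1"
  shows "norm (sin \<zeta>) < cosh 1"
proof -
  have "\<bar>Im \<zeta>\<bar> < 1" using abs_Im_le_cmod[of \<zeta>] assms by linarith
  then have "cosh (Im \<zeta>) < cosh 1"
    by (metis abs_ge_zero cosh_real_abs cosh_real_nonneg_less_iff zero_le_one)
  then show ?thesis using norm_sin_le_cosh_Im[of \<zeta>] by linarith
qed

lemma norm_mult_exp_less: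
  fixes \<zeta> :: complex assumes "norm \<zeta> < 1"
  shows "norm (\<zeta> * exp \<zeta>) < exp 1"
proof -
  have "norm (\<zeta> * exp \<zeta>) = norm \<zeta> * exp (Re \<zeta>)" by (simp add: norm_mult)
  also have "\<dots> < exp (Re \<zeta>)" using assms by simp
  also have "\<dots> < exp 1" using complex_Re_le_cmod[of \<zeta>] assms by simp
  finally show ?thesis .
qed

lemma norm_Ln_squared_le:
  assumes "0 \<le> Re w" "w \<noteq> 0"
  shows "norm (Ln w) ^ 2 \<le> ln (norm w) ^ 2 + (pi / 2) ^ 2"
proof -
  have "\<bar>Im (Ln w)\<bar> \<le> pi / 2" using Re_Ln_pos_le assms by simp
  then have "Im (Ln w) ^ 2 \<le> (pi / 2) ^ 2" by (metis abs_le_square_iff abs_of_nonneg pi_half_ge_zero)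
  then show ?thesis using assms by (simp add: cmod_power2)
qed

lemma Re_add_csqrt_nonneg: "0 \<le> Re (z + csqrt (1 + z^2))"
proof -
  define s where "s = csqrt (1 + z^2)"
  define w where "w = z + s"
  have "s^2 = 1 + z^2" by (simp add: s_def)
  then have inv: "w * (s - z) = 1" by (simp add: w_def algebra_simps power2_eq_square)
  \<comment> \<open>so w + 1/w = 2 s, and Re (1/w) has the sign of Re w\<close>
  then have "w \<noteq> 0" by auto
  with inv have "inverse w = s - z" by (simp add: field_simps)
  then have "Re w + Re (inverse w) = 2 * Re s" by (simp add: w_def)
  moreover have "Re (inverse w) = Re w / norm w ^ 2" by (simp add: cmod_power2)
  ultimately have "Re w + Re w / norm w ^ 2 = 2 * Re s" by metis
  moreover have "0 \<le> Re s" unfolding s_def by (rule Re_csqrt)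
  ultimately have "0 \<le> Re w * (1 + 1 / norm w ^ 2)" by (simp add: algebra_simps)
  moreover have "0 < 1 + 1 / norm w ^ 2" by (intro add_pos_nonneg) auto
  ultimately show ?thesis by (simp add: zero_le_mult_iff w_def s_def)
qed

lemma norm_casinh_less:
  fixes \<zeta> :: complex assumes \<zeta>: "norm \<zeta> < 1"
  shows "norm (casinh \<zeta>) < 5/2"
proof -
  define s where "s = csqrt (1 + \<zeta>^2)"
  define w where "w = \<zeta> + s"
  have "s^2 = 1 + \<zeta>^2" by (simp add: s_def)
  then have inv: "w * (s - \<zeta>) = 1" by (simp add: w_def algebra_simps power2_eq_square)
  then have w0: "w \<noteq> 0" by auto
  have "norm s = sqrt (norm (1 + \<zeta>^2))" by (simp add: s_def)
  also have "\<dots> \<le> sqrt 2"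
    using norm_triangle_ineq[of 1 "\<zeta>^2"] \<zeta> power_less_one_iff[of "norm \<zeta>" 2]
    by (simp add: norm_power)
  also have "sqrt 2 < (17/10::real)" by (rule real_less_lsqrt) (simp_all add: power2_eq_square)
  finally have w_lt: "norm w < exp 1" and "norm (s - \<zeta>) < exp 1"
    using norm_triangle_ineq[of \<zeta> s] norm_triangle_ineq4[of s \<zeta>] \<zeta> exp_one_gt_27_10
    unfolding w_def by linarith+
  then have "norm w * norm (s - \<zeta>) < norm w * exp 1"
    using w0 by (intro mult_strict_left_mono) auto
  moreover have "norm w * norm (s - \<zeta>) = 1" using inv by (metis norm_mult norm_one)
  ultimately have "exp (-1) < norm w" by (simp add: exp_minus field_simps)
  with w_lt have "ln (exp (-1)) < ln (norm w)" "ln (norm w) < ln (exp 1)"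
    using w0 by (subst ln_less_cancel_iff; simp)+
  then have "\<bar>ln (norm w)\<bar> < 1" by simp
  moreover have "0 \<le> Re w" unfolding w_def s_def by (rule Re_add_csqrt_nonneg)
  moreover have "(pi / 2) ^ 2 < 4"
    using power_strict_mono[OF pi_half_less_two, of 2] by simp
  ultimately have "norm (Ln w) ^ 2 < 25/4"
    using norm_Ln_squared_le[OF _ w0] abs_square_less_1[of "ln (norm w)"] by fastforce
  then have "norm (Ln w) ^ 2 < (5/2) ^ 2" by (simp add: power_divide)
  then show ?thesis
    unfolding casinh_def s_def[symmetric] w_def[symmetric] by (rule power2_less_imp_less) simp
qed

lemma norm_exp_sub_one_less:
  fixes \<zeta> :: complex assumes "norm \<zeta> < 1"
  shows "norm (exp \<zeta> - 1) < exp 1"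
proof -
  have "norm (exp w) \<le> exp 1" if "w \<in> ball 0 1" for w :: complex
    using complex_Re_le_cmod[of w] that by simp
  then have "norm (exp \<zeta> - exp 0) \<le> exp 1 * norm (\<zeta> - 0)"
    by (intro field_differentiable_bound[OF convex_ball[of 0 1]]) (auto intro!: derivative_eq_intros assms)
  then have "norm (exp \<zeta> - 1) \<le> exp 1 * norm \<zeta>" by simp
  also have "\<dots> < exp 1" using assms by simp
  finally show ?thesis .
qed

lemma exp_one_sub_one_mult_bounds:
  "4/5 \<le> (exp 1 - 1) * r0" "2 \<le> (exp 1 - 1) * sqrt 2" "cosh 1 \<le> (exp 1 - 1) * sinh (1::real)"
  "exp 1 \<le> (exp 1 - 1) * exp (1::real)" "5/2 \<le> (exp 1 - 1) * (pi / 2)"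
  "exp 1 \<le> (exp 1 - 1) * (exp 1 - 1::real)"
proof -
  have e: "27/10 < exp (1::real)" by (rule exp_one_gt_27_10)
  have "4/5 \<le> (exp 1 - 1) * (1/2::real)" using e by simp
  also have "\<dots> \<le> (exp 1 - 1) * r0" using r0_ge_half e by (intro mult_left_mono) auto
  finally show "4/5 \<le> (exp 1 - 1) * r0" .
  have "2 \<le> (exp 1 - 1) * (6/5::real)" using e by simp
  also have "\<dots> \<le> (exp 1 - 1) * sqrt 2"
    using e by (intro mult_left_mono real_le_rsqrt) (auto simp: power2_eq_square)
  finally show "2 \<le> (exp 1 - 1) * sqrt 2" .
  have e2: "(exp 1 - 1) * (17/10) < (exp 1 - 1) * (exp 1 - 1::real)"
    using e by (intro mult_strict_left_mono) auto
  then have "2 * exp 1 + 1 < exp 1 * exp (1::real)" using e by (simp add: field_simps)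
  moreover have "(exp 1 - 1) * sinh 1 - cosh 1 = 1/2 * (exp 1 * exp 1) - exp 1 - (1/2::real)"
    by (simp add: cosh_def sinh_def exp_minus field_simps)
  ultimately show "cosh 1 \<le> (exp 1 - 1) * sinh (1::real)" by linarith
  show "exp 1 \<le> (exp 1 - 1) * exp (1::real)" using e by (simp add: algebra_simps)
  have "5/2 \<le> (exp 1 - 1) * (3/2::real)" using e by simp
  also have "\<dots> \<le> (exp 1 - 1) * (pi / 2)" using pi_gt3 e by (intro mult_left_mono) auto
  finally show "5/2 \<le> (exp 1 - 1) * (pi / 2)" .
  show "exp 1 \<le> (exp 1 - 1) * (exp 1 - 1::real)" using e e2 by simp
qed

theorem corollary4p11:
  fixes a1 a2 :: real and f :: "complex \<Rightarrow> complex"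
  assumes "a1 > 0" and "a2 > 0"
    and "f \<in> class_A"
    and "\<forall>z. 0 < norm z \<and> norm z < 1 \<longrightarrow> f z \<noteq> 0"
    and "(subord (Yf a1 a2 f) (\<lambda>z. 2 / (1 + exp (- z))) \<and> a1 - a2 \<ge> exp 1 * r0)
       \<or> (subord (Yf a1 a2 f) (\<lambda>z. z + csqrt (1 + z^2)) \<and> a1 - a2 \<ge> sqrt 2 * exp 1)
       \<or> (subord (Yf a1 a2 f) (\<lambda>z. 1 + sin z) \<and> a1 - a2 \<ge> exp 1 * sinh 1)
       \<or> (subord (Yf a1 a2 f) (\<lambda>z. 1 + z * exp z) \<and> a1 - a2 \<ge> (exp 1)^2)
       \<or> (subord (Yf a1 a2 f) (\<lambda>z. 1 + casinh z) \<and> 2 * (a1 - a2) \<ge> pi * exp 1)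
       \<or> (subord (Yf a1 a2 f) exp \<and> a1 - a2 \<ge> exp 1 * (exp 1 - 1))"
  shows "f \<in> starlike_exp"
proof -
  have criterion: "f \<in> starlike_exp"
    if "subord (Yf a1 a2 f) h" "exp 1 * \<rho> \<le> a1 - a2"
      "\<And>\<zeta>. norm \<zeta> < 1 \<Longrightarrow> norm (h \<zeta> - 1) < (exp 1 - 1) * \<rho>" for h \<rho>
    by (rule starlike_exp_if_subord_Yf[OF assms(3) _ assms(2) that]) (use assms(4) in auto)
  note bounds = exp_one_sub_one_mult_bounds
  from assms(5) show ?thesis
  proof (elim disjE conjE)
    assume "subord (Yf a1 a2 f) (\<lambda>z. 2 / (1 + exp (- z)))" "exp 1 * r0 \<le> a1 - a2"
    then show ?thesis
      by (rule criterion) (simp add: order.strict_trans2[OF norm_sigmoid_sub_one_less bounds(1)])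
  next
    assume "subord (Yf a1 a2 f) (\<lambda>z. z + csqrt (1 + z^2))" "sqrt 2 * exp 1 \<le> a1 - a2"
    then show ?thesis
      by (rule criterion[unfolded mult.commute[of "exp 1"]])
         (simp add: order.strict_trans2[OF norm_crescent_sub_one_less bounds(2)])
  next
    assume "subord (Yf a1 a2 f) (\<lambda>z. 1 + sin z)" "exp 1 * sinh 1 \<le> a1 - a2"
    then show ?thesis
      by (rule criterion) (simp add: order.strict_trans2[OF norm_sin_less_cosh_one bounds(3)])
  next
    assume "subord (Yf a1 a2 f) (\<lambda>z. 1 + z * exp z)" "(exp 1)^2 \<le> a1 - a2"
    then show ?thesis
      by (rule criterion[where \<rho> = "exp 1", folded power2_eq_square])
         (simp add: order.strict_trans2[OF norm_mult_exp_less bounds(4)])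
  next
    assume "subord (Yf a1 a2 f) (\<lambda>z. 1 + casinh z)" "pi * exp 1 \<le> 2 * (a1 - a2)"
    then have "subord (Yf a1 a2 f) (\<lambda>z. 1 + casinh z)" "exp 1 * (pi / 2) \<le> a1 - a2"
      by (simp_all add: field_simps mult.commute)
    then show ?thesis
      by (rule criterion) (use order.strict_trans2[OF norm_casinh_less bounds(5)] in simp)
  next
    assume "subord (Yf a1 a2 f) exp" "exp 1 * (exp 1 - 1) \<le> a1 - a2"
    then show ?thesis
      by (rule criterion) (simp add: order.strict_trans2[OF norm_exp_sub_one_less bounds(6)])
  qed
qed

end
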